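(* Let $X$ be a Banach space as described in the context and let $K\subset\mathbb{D}$ be compact. Then there is a constant $C$ (depending on $K$ but not on $f$ or $z$) such that for every $f\in X$ and every $z\in K$, $$|f(z)|\le C\|f\| .$$
   Context: $\mathbb{D}=\{z\in\mathbb{C}:|z|<1\}$. $X$ is a complex Banach space of functions analytic in $\mathbb{D}$ whose norm $\|\cdot\|$ satisfies: (i) $\|f(\cdot\, e^{it})\|=\|f(\cdot)\|$ for all $t\in\mathbb{R}$ and $f\in X$; (ii) $\|f\|<\infty$ for every entire function $f$; (iii) for all $f\in X$ and $g\in L[0,2\pi]$, $\big\|\frac{1}{2\pi}\int_0^{2\pi} f(ze^{it})g(t)\,dt\big\|\le \frac{1}{2\pi}\int_0^{2\pi}|g(t)|\,dt\cdot\|f\|$. *)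

theory Defs
  imports "HOL-Analysis.Analysis"
begin

text \<open>Convention: a function analytic in the unit disc D is represented by a total
function complex \<Rightarrow> complex which is holomorphic on D and vanishes outside D.\<close>

definition vanishes_off_disc :: "(complex \<Rightarrow> complex) \<Rightarrow> bool" where
  "vanishes_off_disc f \<longleftrightarrow> (\<forall>z. z \<notin> ball 0 1 \<longrightarrow> f z = 0)"

definition restrict_disc :: "(complex \<Rightarrow> complex) \<Rightarrow> complex \<Rightarrow> complex" where
  "restrict_disc f = (\<lambda>z. if z \<in> ball 0 1 then f z else 0)"

definition banach_fun_space :: "(complex \<Rightarrow> complex) set \<Rightarrow> ((complex \<Rightarrow> complex) \<Rightarrow> real) \<Rightarrow> bool" where
  "banach_fun_space X N \<longleftrightarrow>
     (\<lambda>z. 0) \<in> X \<and>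
     (\<forall>f\<in>X. \<forall>g\<in>X. (\<lambda>z. f z + g z) \<in> X) \<and>
     (\<forall>f\<in>X. \<forall>c::complex. (\<lambda>z. c * f z) \<in> X) \<and>
     (\<forall>f\<in>X. N f \<ge> 0) \<and>
     (\<forall>f\<in>X. N f = 0 \<longleftrightarrow> f = (\<lambda>z. 0)) \<and>
     (\<forall>f\<in>X. \<forall>c::complex. N (\<lambda>z. c * f z) = norm c * N f) \<and>
     (\<forall>f\<in>X. \<forall>g\<in>X. N (\<lambda>z. f z + g z) \<le> N f + N g) \<and>
     (\<forall>F::nat \<Rightarrow> complex \<Rightarrow> complex. (\<forall>n. F n \<in> X) \<longrightarrow>
        (\<forall>e>0. \<exists>M. \<forall>m\<ge>M. \<forall>n\<ge>M. N (\<lambda>z. F m z - F n z) < e) \<longrightarrow>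
        (\<exists>f\<in>X. (\<lambda>n. N (\<lambda>z. F n z - f z)) \<longlonglongrightarrow> 0))"

definition admissible_space :: "(complex \<Rightarrow> complex) set \<Rightarrow> ((complex \<Rightarrow> complex) \<Rightarrow> real) \<Rightarrow> bool" where
  "admissible_space X N \<longleftrightarrow>
     banach_fun_space X N \<and>
     (\<forall>f\<in>X. f holomorphic_on ball 0 1 \<and> vanishes_off_disc f) \<and>
     \<comment> \<open>(i) rotation invariance\<close>
     (\<forall>f\<in>X. \<forall>t::real. (\<lambda>z. f (z * exp (\<i> * t))) \<in> X \<and> N (\<lambda>z. f (z * exp (\<i> * t))) = N f) \<and>
     \<comment> \<open>(ii) entire functions belong to X\<close>
     (\<forall>f. f holomorphic_on UNIV \<longrightarrow> restrict_disc f \<in> X) \<and>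
     \<comment> \<open>(iii) convolution with L^1 functions\<close>
     (\<forall>f\<in>X. \<forall>g::real \<Rightarrow> complex. set_integrable lborel {0..2*pi} g \<longrightarrow>
        (\<lambda>z. (1 / (2*pi)) * (LINT t:{0..2*pi}|lborel. f (z * exp (\<i> * t)) * g t)) \<in> X \<and>
        N (\<lambda>z. (1 / (2*pi)) * (LINT t:{0..2*pi}|lborel. f (z * exp (\<i> * t)) * g t))
          \<le> (1 / (2*pi)) * (LINT t:{0..2*pi}|lborel. norm (g t)) * N f)"

end

theory Submission
  imports Defs "HOL-Complex_Analysis.Complex_Analysis"
begin

text \<open>Convolving \<open>f\<close> with \<open>e\<^sup>-\<^sup>i\<^sup>n\<^sup>t\<close> isolates its \<open>n\<close>-th Taylor term, so property (iii) gives
  \<open>|a\<^sub>n| \<parallel>z\<^sup>n\<parallel> \<le> \<parallel>f\<parallel>\<close>. Completeness forces \<open>\<parallel>z\<^sup>n\<parallel> > \<rho>\<^sup>n\<close> eventually, for every \<open>\<rho> < 1\<close>: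
  otherwise, with \<open>s = \<surd>\<rho>\<close>, the series of \<open>s\<^sup>-\<^sup>n z\<^sup>n\<close> over the infinitely many bad \<open>n\<close>
  converges absolutely in \<open>X\<close> to a function holomorphic in the disc whose Taylor series
  diverges at \<open>s\<close>. Hence \<open>\<Sum> r\<^sup>n / \<parallel>z\<^sup>n\<parallel> < \<infinity>\<close> for \<open>r < 1\<close>, and summing the Taylor series of
  \<open>f\<close> bounds \<open>|f(z)|\<close> by that constant times \<open>\<parallel>f\<parallel>\<close> on \<open>|z| \<le> r\<close>.\<close>

definition taylor_coeff :: "(complex \<Rightarrow> complex) \<Rightarrow> nat \<Rightarrow> complex" where
  "taylor_coeff f n = (deriv ^^ n) f 0 / fact n"

lemma has_integral_taylor_coeff_circle:
  assumes holf: "f holomorphic_on ball 0 1" and z: "norm z < 1"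
  shows "((\<lambda>t::real. f (z * exp (\<i> * t)) * exp (-(\<i> * of_nat n * t)))
           has_integral (2*pi) * (taylor_coeff f n * z^n)) {0..2*pi}"
proof -
  define S where "S = (\<lambda>u. z * u) -` ball 0 1"
  have "open S"
    unfolding S_def by (intro open_vimage continuous_intros) auto
  have "cball 0 1 \<subseteq> S"
  proof
    fix u :: complex
    assume "u \<in> cball 0 1"
    then have "norm (z * u) \<le> norm z"
      by (simp add: norm_mult mult_left_le)
    then show "u \<in> S"
      using z by (simp add: S_def)
  qed
  have "(\<lambda>u. f (z * u)) holomorphic_on S"
    using holomorphic_on_compose_gen[of "\<lambda>u. z * u" S f "ball 0 1", unfolded o_def] holf
    by (auto intro: holomorphic_intros simp: S_def)
  then have "((\<lambda>u. f (z * u) / (u - 0) ^ Suc n) has_contour_integral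
              (2*pi*\<i>) / fact n * (deriv ^^ n) (\<lambda>u. f (z * u)) 0) (circlepath 0 1)"
    using \<open>cball 0 1 \<subseteq> S\<close>
    by (intro Cauchy_has_contour_integral_higher_derivative_circlepath)
       (auto intro: holomorphic_on_imp_continuous_on
          dest: order_trans[OF ball_subset_cball])
  moreover have "(deriv ^^ n) (\<lambda>u. f (z * u)) 0 = z ^ n * (deriv ^^ n) f 0"
    using higher_deriv_compose_linear[OF holf \<open>open S\<close>, of 0 z n] \<open>cball 0 1 \<subseteq> S\<close>
    by (auto simp: S_def)
  ultimately have "((\<lambda>t. f (z * cis t) / cis t ^ Suc n * \<i> * cis t) has_integral
                     2*pi*\<i> * (taylor_coeff f n * z^n)) {0..2*pi}"
    by (simp add: circlepath_def has_contour_integral_part_circlepath_iff taylor_coeff_def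
        field_simps)
  from has_integral_mult_right[OF this, of "-\<i>"] show ?thesis
    by (simp add: cis_conv_exp exp_minus exp_of_nat_mult[symmetric] field_simps)
qed

lemma taylor_coeff_eq_set_integral:
  assumes holf: "f holomorphic_on ball 0 1" and z: "norm z < 1"
  shows "set_integrable lborel {0..2*pi} (\<lambda>t::real. f (z * exp (\<i> * t)) * exp (-(\<i> * of_nat n * t)))"
    and "(1 / (2*pi)) * (LINT t:{0..2*pi}|lborel. f (z * exp (\<i> * t)) * exp (-(\<i> * of_nat n * t)))
           = taylor_coeff f n * z^n"
proof -
  have "continuous_on {0..2*pi} (\<lambda>t::real. f (z * exp (\<i> * t)))"
    using z by (intro continuous_on_compose2[OF holomorphic_on_imp_continuous_on[OF holf]]
        continuous_intros) (auto simp: norm_mult)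
  then have "continuous_on {0..2*pi} (\<lambda>t::real. f (z * exp (\<i> * t)) * exp (-(\<i> * of_nat n * t)))"
    by (intro continuous_intros)
  then show integrable: "set_integrable lborel {0..2*pi}
      (\<lambda>t::real. f (z * exp (\<i> * t)) * exp (-(\<i> * of_nat n * t)))"
    unfolding set_integrable_def by (intro borel_integrable_compact) auto
  show "(1 / (2*pi)) * (LINT t:{0..2*pi}|lborel. f (z * exp (\<i> * t)) * exp (-(\<i> * of_nat n * t)))
      = taylor_coeff f n * z^n"
    using set_borel_integral_eq_integral(2)[OF integrable]
      integral_unique[OF has_integral_taylor_coeff_circle[OF holf z]]
    by simp
qed

lemma taylor_coeff_cong_nhds:
  assumes "eventually (\<lambda>z. f z = g z) (nhds 0)"
  shows "taylor_coeff f n = taylor_coeff g n"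
  using higher_deriv_cong_ev[OF assms refl] by (simp add: taylor_coeff_def)

lemma taylor_coeff_diff:
  assumes "f holomorphic_on ball 0 1" and "g holomorphic_on ball 0 1"
  shows "taylor_coeff (\<lambda>z. f z - g z) n = taylor_coeff f n - taylor_coeff g n"
  using higher_deriv_diff[OF assms] by (simp add: taylor_coeff_def diff_divide_distrib)

lemma taylor_coeff_polynomial:
  "taylor_coeff (\<lambda>w. \<Sum>k<m. c k * w ^ k) j = (if j < m then c j else 0)"
proof (induction m)
  case (Suc m)
  have "(deriv ^^ j) (\<lambda>w. c m * w ^ m) 0 = c m * (deriv ^^ j) (\<lambda>w. w ^ m) 0"
    by (rule higher_deriv_cmult[where A=UNIV]) (auto intro!: holomorphic_intros)
  also have "(deriv ^^ j) (\<lambda>w::complex. w ^ m) 0 = (if j = m then fact m else 0)"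
    using higher_deriv_power[of j 0 m 0] by (auto simp: pochhammer_fact[symmetric] pochhammer_0_left)
  finally have "taylor_coeff (\<lambda>w. c m * w ^ m) j = (if j = m then c m else 0)"
    by (simp add: taylor_coeff_def)
  moreover have "(deriv ^^ j) (\<lambda>w. (\<Sum>k<m. c k * w ^ k) + c m * w ^ m) 0
      = (deriv ^^ j) (\<lambda>w. \<Sum>k<m. c k * w ^ k) 0 + (deriv ^^ j) (\<lambda>w. c m * w ^ m) 0"
    by (rule higher_deriv_add[where S=UNIV]) (auto intro!: holomorphic_intros)
  ultimately show ?case
    using Suc by (auto simp: taylor_coeff_def add_divide_distrib less_Suc_eq)
qed (simp add: taylor_coeff_def)

lemma taylor_terms_tendsto_zero:
  assumes "f holomorphic_on ball 0 1" and "0 \<le> r" and "r < 1"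
  shows "(\<lambda>n. norm (taylor_coeff f n) * r ^ n) \<longlonglongrightarrow> 0"
proof -
  have "(\<lambda>n. taylor_coeff f n * (of_real r - 0) ^ n) sums f (of_real r)"
    unfolding taylor_coeff_def using assms by (intro holomorphic_power_series) auto
  then have "(\<lambda>n. taylor_coeff f n * of_real r ^ n) \<longlonglongrightarrow> 0"
    by (simp add: summable_LIMSEQ_zero sums_summable)
  then show ?thesis
    using tendsto_norm_zero assms(2) by (fastforce simp: norm_mult norm_power)
qed

locale banach_function_space =
  fixes X :: "(complex \<Rightarrow> complex) set" and N :: "(complex \<Rightarrow> complex) \<Rightarrow> real"
  assumes banach_fun_space: "banach_fun_space X N"
begin

lemma add_mem: "f \<in> X \<Longrightarrow> g \<in> X \<Longrightarrow> (\<lambda>z. f z + g z) \<in> X"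
  and scale_mem: "f \<in> X \<Longrightarrow> (\<lambda>z. c * f z) \<in> X"
  and norm_eq_zero: "f \<in> X \<Longrightarrow> N f = 0 \<longleftrightarrow> f = (\<lambda>z. 0)"
  and norm_nonneg: "f \<in> X \<Longrightarrow> 0 \<le> N f"
  and norm_scale: "f \<in> X \<Longrightarrow> N (\<lambda>z. c * f z) = norm c * N f"
  and norm_add_le: "f \<in> X \<Longrightarrow> g \<in> X \<Longrightarrow> N (\<lambda>z. f z + g z) \<le> N f + N g"
  using banach_fun_space unfolding banach_fun_space_def by blast+

lemma complete:
  assumes "\<And>n. F n \<in> X" and "\<And>e. e > 0 \<Longrightarrow> \<exists>M. \<forall>m\<ge>M. \<forall>n\<ge>M. N (\<lambda>z. F m z - F n z) < e"
  obtains G where "G \<in> X" and "(\<lambda>n. N (\<lambda>z. F n z - G z)) \<longlonglongrightarrow> 0"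
  using banach_fun_space assms unfolding banach_fun_space_def by blast

lemma diff_mem: "f \<in> X \<Longrightarrow> g \<in> X \<Longrightarrow> (\<lambda>z. f z - g z) \<in> X"
  using add_mem[of f "\<lambda>z. -1 * g z"] scale_mem[of g "-1"] by simp

lemma norm_diff_commute:
  assumes "f \<in> X" and "g \<in> X"
  shows "N (\<lambda>z. f z - g z) = N (\<lambda>z. g z - f z)"
  using norm_scale[OF diff_mem[OF assms(2,1)], of "-1"] by simp

lemma sum_mem_norm_sum_le:
  assumes "finite I" and "\<And>k. k \<in> I \<Longrightarrow> u k \<in> X"
  shows "(\<lambda>z. \<Sum>k\<in>I. u k z) \<in> X \<and> N (\<lambda>z. \<Sum>k\<in>I. u k z) \<le> (\<Sum>k\<in>I. N (u k))"
  using assms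
proof (induction I rule: finite_induct)
  case empty
  have "(\<lambda>z. 0) \<in> X" and "N (\<lambda>z. 0) = 0"
    using banach_fun_space unfolding banach_fun_space_def by auto
  then show ?case by simp
next
  case (insert k I)
  then show ?case
    using add_mem[of "u k" "\<lambda>z. \<Sum>k\<in>I. u k z"] norm_add_le[of "u k" "\<lambda>z. \<Sum>k\<in>I. u k z"]
    by auto
qed

lemma summable_norm_imp_converges:
  assumes mem: "\<And>k. u k \<in> X" and summable: "summable (\<lambda>k. N (u k))"
  obtains G where "G \<in> X" and "(\<lambda>m. N (\<lambda>z. (\<Sum>k<m. u k z) - G z)) \<longlonglongrightarrow> 0"
proof -
  define F where "F m = (\<lambda>z. \<Sum>k<m. u k z)" for m
  have F_mem: "F m \<in> X" for m
    using sum_mem_norm_sum_le[of "{..<m}" u] mem by (simp add: F_def)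
  have F_dist: "N (\<lambda>z. F m z - F n z) \<le> (\<Sum>k\<in>{n..<m}. N (u k))" if "n \<le> m" for m n
  proof -
    have "(\<lambda>z. F m z - F n z) = (\<lambda>z. \<Sum>k\<in>{n..<m}. u k z)"
      using that by (simp add: F_def lessThan_atLeast0 sum_diff_nat_ivl)
    then show ?thesis
      using sum_mem_norm_sum_le[of "{n..<m}" u] mem by simp
  qed
  have "\<exists>M. \<forall>m\<ge>M. \<forall>n\<ge>M. N (\<lambda>z. F m z - F n z) < e" if "e > 0" for e
  proof -
    obtain M where M: "\<And>n m. n \<ge> M \<Longrightarrow> norm (\<Sum>k\<in>{n..<m}. N (u k)) < e"
      using summable \<open>e > 0\<close> unfolding summable_Cauchy by blast
    have "N (\<lambda>z. F m z - F n z) < e" if "n \<ge> M" "n \<le> m" for m n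
      using F_dist[OF \<open>n \<le> m\<close>] M[OF \<open>n \<ge> M\<close>, of m] by simp
    then show ?thesis
      by (metis F_mem nle_le norm_diff_commute)
  qed
  then obtain G where "G \<in> X" and "(\<lambda>n. N (\<lambda>z. F n z - G z)) \<longlonglongrightarrow> 0"
    using complete[of F, OF F_mem] by blast
  then show ?thesis
    using that by (simp add: F_def)
qed

end

definition disc_monomial :: "nat \<Rightarrow> complex \<Rightarrow> complex" where
  "disc_monomial n = restrict_disc (\<lambda>z. z ^ n)"

lemma taylor_coeff_disc_polynomial:
  "taylor_coeff (\<lambda>z. \<Sum>k<m. c k * disc_monomial k z) j = (if j < m then c j else 0)"
proof -
  have "taylor_coeff (\<lambda>z. \<Sum>k<m. c k * disc_monomial k z) j = taylor_coeff (\<lambda>z. \<Sum>k<m. c k * z ^ k) j"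
    by (intro taylor_coeff_cong_nhds eventually_nhds_in_open[of "ball 0 1", THEN eventually_mono])
       (auto simp: disc_monomial_def restrict_disc_def)
  then show ?thesis
    by (simp add: taylor_coeff_polynomial)
qed

locale admissible_function_space =
  fixes X :: "(complex \<Rightarrow> complex) set" and N :: "(complex \<Rightarrow> complex) \<Rightarrow> real"
  assumes admissible_space: "admissible_space X N"

sublocale admissible_function_space \<subseteq> banach_function_space
  using admissible_space unfolding admissible_space_def by unfold_locales blast

context admissible_function_space
begin

lemma holomorphic_on_disc: "f \<in> X \<Longrightarrow> f holomorphic_on ball 0 1"
  and vanishes_off_disc: "f \<in> X \<Longrightarrow> vanishes_off_disc f"
  and entire_mem: "g holomorphic_on UNIV \<Longrightarrow> restrict_disc g \<in> X"
  using admissible_space unfolding admissible_space_def by blast+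

lemma convolution_mem_norm_le:
  fixes g :: "real \<Rightarrow> complex"
  assumes "f \<in> X" and "set_integrable lborel {0..2*pi} g"
  shows "(\<lambda>z. (1 / (2*pi)) * (LINT t:{0..2*pi}|lborel. f (z * exp (\<i> * t)) * g t)) \<in> X"
    and "N (\<lambda>z. (1 / (2*pi)) * (LINT t:{0..2*pi}|lborel. f (z * exp (\<i> * t)) * g t))
          \<le> (1 / (2*pi)) * (LINT t:{0..2*pi}|lborel. norm (g t)) * N f"
  using admissible_space assms unfolding admissible_space_def by blast+

lemma disc_monomial_mem: "disc_monomial n \<in> X"
  unfolding disc_monomial_def by (intro entire_mem holomorphic_intros)

lemma norm_disc_monomial_pos: "N (disc_monomial n) > 0"
proof -
  have "disc_monomial n (1/2) \<noteq> 0"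
    by (simp add: disc_monomial_def restrict_disc_def)
  then have "disc_monomial n \<noteq> (\<lambda>z. 0)"
    by metis
  then show ?thesis
    using norm_eq_zero norm_nonneg disc_monomial_mem by (simp add: order_less_le)
qed

lemma taylor_term_mem_norm_le:
  assumes f: "f \<in> X"
  shows "(\<lambda>z. taylor_coeff f n * disc_monomial n z) \<in> X"
    and "N (\<lambda>z. taylor_coeff f n * disc_monomial n z) \<le> N f"
proof -
  define g where "g t = exp (-(\<i> * of_nat n * of_real t))" for t :: real
  have "continuous_on {0..2*pi} g"
    unfolding g_def by (intro continuous_intros)
  then have g_integrable: "set_integrable lborel {0..2*pi} g"
    unfolding set_integrable_def by (intro borel_integrable_compact) auto
  have "(LINT t:{0..2*pi}|lborel. norm (g t)) = (LINT t:{0..2*pi}|lborel. (1::real))"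
    unfolding g_def by (simp add: norm_exp_eq_Re)
  also have "\<dots> = 2*pi"
    by (subst set_integral_const) auto
  finally have norm_g: "(LINT t:{0..2*pi}|lborel. norm (g t)) = 2*pi" .
  have projection: "(\<lambda>z. (1/(2*pi)) * (LINT t:{0..2*pi}|lborel. f (z * exp (\<i> * t)) * g t))
      = (\<lambda>z. taylor_coeff f n * disc_monomial n z)"
  proof
    fix z :: complex
    show "(1/(2*pi)) * (LINT t:{0..2*pi}|lborel. f (z * exp (\<i> * t)) * g t)
        = taylor_coeff f n * disc_monomial n z"
    proof (cases "norm z < 1")
      case True
      then show ?thesis
        using taylor_coeff_eq_set_integral(2)[OF holomorphic_on_disc[OF f] True, of n]
        by (simp add: g_def disc_monomial_def restrict_disc_def)
    next
      case False
      then have "f (z * exp (\<i> * t)) = 0" for t :: real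
        using vanishes_off_disc[OF f] by (simp add: vanishes_off_disc_def norm_mult)
      then show ?thesis
        using False by (simp add: disc_monomial_def restrict_disc_def)
    qed
  qed
  show "(\<lambda>z. taylor_coeff f n * disc_monomial n z) \<in> X"
    and "N (\<lambda>z. taylor_coeff f n * disc_monomial n z) \<le> N f"
    using convolution_mem_norm_le[OF f g_integrable] unfolding projection norm_g by auto
qed

lemma norm_taylor_coeff_le:
  assumes "f \<in> X"
  shows "norm (taylor_coeff f n) * N (disc_monomial n) \<le> N f"
  using taylor_term_mem_norm_le(2)[OF assms, of n]
  unfolding norm_scale[OF disc_monomial_mem] .

lemma taylor_coeff_tendsto:
  assumes F: "\<And>m. F m \<in> X" and G: "G \<in> X" and lim: "(\<lambda>m. N (\<lambda>z. F m z - G z)) \<longlonglongrightarrow> 0"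
  shows "(\<lambda>m. taylor_coeff (F m) j) \<longlonglongrightarrow> taylor_coeff G j"
proof -
  have "\<forall>m. norm (taylor_coeff (F m) j - taylor_coeff G j) \<le> N (\<lambda>z. F m z - G z) / N (disc_monomial j)"
    using norm_taylor_coeff_le[OF diff_mem[OF F G]] norm_disc_monomial_pos[of j]
    unfolding taylor_coeff_diff[OF holomorphic_on_disc[OF F] holomorphic_on_disc[OF G]]
    by (simp only: pos_le_divide_eq) blast
  from Lim_null_comparison[OF always_eventually[OF this] tendsto_divide_zero[OF lim]]
  show ?thesis
    by (simp only: LIM_zero_iff)
qed

lemma norm_disc_monomial_eventually_gt:
  assumes "0 < \<rho>" and "\<rho> < 1"
  shows "eventually (\<lambda>n. \<rho> ^ n < N (disc_monomial n)) sequentially"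
proof (rule ccontr)
  assume "\<not> eventually (\<lambda>n. \<rho> ^ n < N (disc_monomial n)) sequentially"
  then have small_often: "frequently (\<lambda>n. N (disc_monomial n) \<le> \<rho> ^ n) sequentially"
    by (simp add: not_eventually not_less)
  define s where "s = sqrt \<rho>"
  have "0 < s" "s < 1" and \<rho>_eq: "\<rho> = s * s"
    using assms by (auto simp: s_def)
  define c :: "nat \<Rightarrow> complex"
    where "c k = (if N (disc_monomial k) \<le> \<rho> ^ k then 1 / of_real s ^ k else 0)" for k
  define u where "u k = (\<lambda>z. c k * disc_monomial k z)" for k
  have u_mem: "u k \<in> X" for k
    unfolding u_def by (intro scale_mem disc_monomial_mem)
  have norm_u: "N (u k) \<le> s ^ k" for k
  proof -
    have "N (u k) = norm (c k) * N (disc_monomial k)"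
      unfolding u_def by (rule norm_scale[OF disc_monomial_mem])
    also have "\<dots> \<le> s ^ k"
    proof (cases "N (disc_monomial k) \<le> \<rho> ^ k")
      case True
      then have "N (disc_monomial k) \<le> s ^ k * s ^ k"
        by (simp add: \<rho>_eq power_mult_distrib)
      then show ?thesis
        using True \<open>0 < s\<close> by (simp add: c_def norm_divide norm_power divide_le_eq)
    next
      case False
      then show ?thesis
        using \<open>0 < s\<close> by (simp add: c_def)
    qed
    finally show ?thesis .
  qed
  have "summable (\<lambda>k. N (u k))"
  proof (rule summable_comparison_test'[OF summable_geometric[of s]])
    show "norm s < 1"
      using \<open>0 < s\<close> \<open>s < 1\<close> by simp
    show "norm (N (u k)) \<le> s ^ k" for k
      using norm_u[of k] norm_nonneg[OF u_mem[of k]] by simp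
  qed
  then obtain G where "G \<in> X" and lim: "(\<lambda>m. N (\<lambda>z. (\<Sum>k<m. u k z) - G z)) \<longlonglongrightarrow> 0"
    using summable_norm_imp_converges u_mem by blast
  have partial_sum_mem: "(\<lambda>z. \<Sum>k<m. u k z) \<in> X" for m
    using sum_mem_norm_sum_le[of "{..<m}" u] u_mem by simp
  have coeff_G: "taylor_coeff G j = c j" for j
  proof -
    have "(\<lambda>m. taylor_coeff (\<lambda>z. \<Sum>k<m. u k z) j) \<longlonglongrightarrow> taylor_coeff G j"
      by (rule taylor_coeff_tendsto[OF partial_sum_mem \<open>G \<in> X\<close> lim])
    moreover have "eventually (\<lambda>m. taylor_coeff (\<lambda>z. \<Sum>k<m. u k z) j = c j) sequentially"
      using eventually_gt_at_top[of j]
      by eventually_elim (simp add: u_def taylor_coeff_disc_polynomial)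
    ultimately show ?thesis
      by (rule LIMSEQ_unique[OF _ tendsto_eventually])
  qed
  have "(\<lambda>n. norm (c n) * s ^ n) \<longlonglongrightarrow> 0"
    using taylor_terms_tendsto_zero[OF holomorphic_on_disc[OF \<open>G \<in> X\<close>]] \<open>0 < s\<close> \<open>s < 1\<close>
    by (simp add: coeff_G)
  then have "eventually (\<lambda>n. norm (c n) * s ^ n < 1) sequentially"
    by (rule order_tendstoD) simp
  then obtain n where "norm (c n) * s ^ n < 1" and "N (disc_monomial n) \<le> \<rho> ^ n"
    using frequently_ex[OF frequently_eventually_conj[OF small_often]] by blast
  then show False
    using \<open>0 < s\<close> by (simp add: c_def norm_divide norm_power)
qed

lemma summable_power_div_norm_disc_monomial:
  assumes "0 \<le> r" and "r < 1"
  shows "summable (\<lambda>n. r ^ n / N (disc_monomial n))"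
proof -
  define \<rho> where "\<rho> = (1 + r) / 2"
  have "0 < \<rho>" "\<rho> < 1" "r < \<rho>"
    using assms by (auto simp: \<rho>_def)
  have "eventually (\<lambda>n. norm (r ^ n / N (disc_monomial n)) \<le> (r / \<rho>) ^ n) sequentially"
    using norm_disc_monomial_eventually_gt[OF \<open>0 < \<rho>\<close> \<open>\<rho> < 1\<close>]
  proof eventually_elim
    case (elim n)
    then have "r ^ n / N (disc_monomial n) \<le> r ^ n / \<rho> ^ n"
      using assms \<open>0 < \<rho>\<close> norm_disc_monomial_pos[of n] by (intro divide_left_mono) auto
    then show ?case
      using assms norm_disc_monomial_pos[of n] by (simp add: power_divide)
  qed
  moreover have "summable (\<lambda>n. (r / \<rho>) ^ n)"
    using assms \<open>0 < \<rho>\<close> \<open>r < \<rho>\<close> by (intro summable_geometric) auto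
  ultimately show ?thesis
    by (rule summable_comparison_test_ev)
qed

lemma norm_le_on_cball:
  assumes "0 \<le> r" "r < 1" and f: "f \<in> X" and z: "norm z \<le> r"
  shows "norm (f z) \<le> (\<Sum>n. r ^ n / N (disc_monomial n)) * N f"
proof -
  have summable: "summable (\<lambda>n. r ^ n / N (disc_monomial n))"
    using summable_power_div_norm_disc_monomial assms by blast
  have "(\<lambda>n. taylor_coeff f n * (z - 0) ^ n) sums f z"
    unfolding taylor_coeff_def using assms
    by (intro holomorphic_power_series[OF holomorphic_on_disc[OF f]]) auto
  then have "norm (f z) = norm (\<Sum>n. taylor_coeff f n * (z - 0) ^ n)"
    by (auto dest: sums_unique)
  also have "\<dots> \<le> (\<Sum>n. N f * (r ^ n / N (disc_monomial n)))"
  proof (rule norm_suminf_le[OF _ summable_mult[OF summable]])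
    fix n
    have "norm (taylor_coeff f n) \<le> N f / N (disc_monomial n)"
      using norm_taylor_coeff_le[OF f, of n] norm_disc_monomial_pos[of n]
      by (simp add: pos_le_divide_eq)
    moreover have "norm z ^ n \<le> r ^ n"
      using z by (intro power_mono) auto
    ultimately have "norm (taylor_coeff f n) * norm z ^ n \<le> N f / N (disc_monomial n) * r ^ n"
      using norm_nonneg[OF f] norm_disc_monomial_pos[of n] by (intro mult_mono) auto
    then show "norm (taylor_coeff f n * (z - 0) ^ n) \<le> N f * (r ^ n / N (disc_monomial n))"
      by (simp add: norm_mult norm_power)
  qed
  also have "\<dots> = (\<Sum>n. r ^ n / N (disc_monomial n)) * N f"
    using suminf_mult[OF summable] by (simp add: mult.commute)
  finally show ?thesis .
qed

end

lemma compact_subset_ball_imp_subset_cball: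
  fixes K :: "'a::metric_space set"
  assumes "compact K" and "K \<subseteq> ball a e" and "0 < e"
  obtains r where "0 \<le> r" "r < e" "K \<subseteq> cball a r"
proof (cases "K = {}")
  case True
  then show ?thesis
    using that \<open>0 < e\<close> by blast
next
  case False
  have "continuous_on K (dist a)"
    by (intro continuous_intros)
  then obtain w where "w \<in> K" and "\<forall>z\<in>K. dist a z \<le> dist a w"
    using continuous_attains_sup[OF \<open>compact K\<close> False] by blast
  then show ?thesis
    using that[of "dist a w"] \<open>K \<subseteq> ball a e\<close> by (force simp: subset_iff)
qed

theorem lemma4p3:
  fixes X :: "(complex \<Rightarrow> complex) set" and N :: "(complex \<Rightarrow> complex) \<Rightarrow> real"
    and K :: "complex set"
  assumes "admissible_space X N"
    and "compact K" and "K \<subseteq> ball 0 1"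
  shows "\<exists>C::real. \<forall>f\<in>X. \<forall>z\<in>K. norm (f z) \<le> C * N f"
proof -
  interpret admissible_function_space X N
    by unfold_locales (rule assms(1))
  obtain r where "0 \<le> r" "r < 1" "K \<subseteq> cball 0 r"
    using compact_subset_ball_imp_subset_cball[OF assms(2,3)] by auto
  then have "\<forall>f\<in>X. \<forall>z\<in>K. norm (f z) \<le> (\<Sum>n. r ^ n / N (disc_monomial n)) * N f"
    by (auto intro!: norm_le_on_cball)
  then show ?thesis ..
qed

end
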